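(* Any two $\alpha$-equivalent closed guarded expressions $\phi,\psi\in\mathcal{E}_0$ are behaviourally equivalent as states of the $T$-coalgebra $(\mathcal{E}_0,\varepsilon)$.
   Context: Standing assumptions: $T:\mathbf{Set}\to\mathbf{Set}$ is a functor; $\mathcal{L}$ is a set of modalities with arities ($L/n$), each $L/n$ assigned an $n$-ary monotone singleton-preserving predicate lifting $[\![L]\!]$ for $T$ (a family $[\![L]\!]_X:(\mathcal{P}X)^n\to\mathcal{P}(TX)$ with $[\![L]\!]_X(f^{-1}[A_1],\dots,f^{-1}[A_n])=(Tf)^{-1}[[\![L]\!]_Y(A_1,\dots,A_n)]$, monotone in each argument, with $|[\![L]\!]_X(\{x_1\},\dots,\{x_n\})|=1$ for all $x_i\in X$). Fix a set $V$ of variables. Expressions: $\phi::=z\mid\nu z.\,\phi\mid L(\phi_1,\dots,\phi_n)$; $\alpha$-equivalence is equality modulo renaming of bound variables. Closed: every variable occurrence bound by a $\nu$; guarded: every variable occurrence separated from its binding $\nu$ by at least one modality; $\mathcal{E}_0$ = closed guarded expressions. The coalgebra $\varepsilon:\mathcal{E}_0\to T\mathcal{E}_0$ is defined by $\varepsilon(L(\phi_1,\dots,\phi_n))=$ the unique element of $[\![L]\!]_{\mathcal{E}_0}(\{\phi_1\},\dots,\{\phi_n\})$ and $\varepsilon(\nu x.\phi)=\varepsilon(\phi[\nu x.\phi/x])$ (well-defined by induction on the number of $\nu$'s not in the scope of a modality). States are behaviourally equivalent if coalgebra morphisms (maps $h$ with $Th\circ\xi=\zeta\circ h$) into a common coalgebra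 identify them. *)

theory Defs
  imports "HOL-Library.FuncSet"
begin

text \<open>A functor on the full subcategory of Set spanned by the subsets of a universe
  type 'u. The action on objects is Tob (with T X a subset of the type 't), the action on
  morphisms is Tmap X Y f for a map f from X to Y (given as a function on 'u, only its
  values on X matter).\<close>

definition set_functor ::
  "('u set \<Rightarrow> 't set) \<Rightarrow> ('u set \<Rightarrow> 'u set \<Rightarrow> ('u \<Rightarrow> 'u) \<Rightarrow> 't \<Rightarrow> 't) \<Rightarrow> bool" where
  "set_functor Tob Tmap \<longleftrightarrow>
     (\<forall>X Y f. f \<in> X \<rightarrow> Y \<longrightarrow> Tmap X Y f \<in> Tob X \<rightarrow> Tob Y) \<and>
     (\<forall>X Y f g. f \<in> X \<rightarrow> Y \<longrightarrow> g \<in> X \<rightarrow> Y \<longrightarrow> (\<forall>x\<in>X. f x = g x) \<longrightarrow>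
        (\<forall>t\<in>Tob X. Tmap X Y f t = Tmap X Y g t)) \<and>
     (\<forall>X. \<forall>t\<in>Tob X. Tmap X X id t = t) \<and>
     (\<forall>X Y Z f g. f \<in> X \<rightarrow> Y \<longrightarrow> g \<in> Y \<rightarrow> Z \<longrightarrow>
        (\<forall>t\<in>Tob X. Tmap X Z (g \<circ> f) t = Tmap Y Z g (Tmap X Y f t)))"

definition pred_lifting ::
  "('u set \<Rightarrow> 't set) \<Rightarrow> ('u set \<Rightarrow> 'u set \<Rightarrow> ('u \<Rightarrow> 'u) \<Rightarrow> 't \<Rightarrow> 't) \<Rightarrow> nat
     \<Rightarrow> ('u set \<Rightarrow> 'u set list \<Rightarrow> 't set) \<Rightarrow> bool" where
  "pred_lifting Tob Tmap n lift \<longleftrightarrow>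
     (\<forall>X As. length As = n \<longrightarrow> (\<forall>A\<in>set As. A \<subseteq> X) \<longrightarrow> lift X As \<subseteq> Tob X) \<and>
     (\<forall>X Y f As. f \<in> X \<rightarrow> Y \<longrightarrow> length As = n \<longrightarrow> (\<forall>A\<in>set As. A \<subseteq> Y) \<longrightarrow>
        lift X (map (\<lambda>A. X \<inter> f -` A) As) = {t \<in> Tob X. Tmap X Y f t \<in> lift Y As}) \<and>
     (\<forall>X As Bs. length As = n \<longrightarrow> length Bs = n \<longrightarrow> (\<forall>B\<in>set Bs. B \<subseteq> X) \<longrightarrow>
        (\<forall>i<n. As ! i \<subseteq> Bs ! i) \<longrightarrow> lift X As \<subseteq> lift X Bs) \<and>
     (\<forall>X xs. length xs = n \<longrightarrow> set xs \<subseteq> X \<longrightarrow> card (lift X (map (\<lambda>x. {x}) xs)) = 1)"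

definition coalgebra :: "('u set \<Rightarrow> 't set) \<Rightarrow> 'u set \<Rightarrow> ('u \<Rightarrow> 't) \<Rightarrow> bool" where
  "coalgebra Tob X \<xi> \<longleftrightarrow> \<xi> \<in> X \<rightarrow> Tob X"

definition coalg_morphism ::
  "('u set \<Rightarrow> 'u set \<Rightarrow> ('u \<Rightarrow> 'u) \<Rightarrow> 't \<Rightarrow> 't) \<Rightarrow> 'u set \<Rightarrow> ('u \<Rightarrow> 't)
     \<Rightarrow> 'u set \<Rightarrow> ('u \<Rightarrow> 't) \<Rightarrow> ('u \<Rightarrow> 'u) \<Rightarrow> bool" where
  "coalg_morphism Tmap X \<xi> Y \<zeta> h \<longleftrightarrow> h \<in> X \<rightarrow> Y \<and> (\<forall>x\<in>X. Tmap X Y h (\<xi> x) = \<zeta> (h x))"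

definition beh_equiv ::
  "('u set \<Rightarrow> 't set) \<Rightarrow> ('u set \<Rightarrow> 'u set \<Rightarrow> ('u \<Rightarrow> 'u) \<Rightarrow> 't \<Rightarrow> 't)
     \<Rightarrow> 'u set \<Rightarrow> ('u \<Rightarrow> 't) \<Rightarrow> 'u \<Rightarrow> 'u set \<Rightarrow> ('u \<Rightarrow> 't) \<Rightarrow> 'u \<Rightarrow> bool" where
  "beh_equiv Tob Tmap X \<xi> x Y \<zeta> y \<longleftrightarrow>
     (\<exists>Z \<gamma> h g. coalgebra Tob Z \<gamma> \<and> coalg_morphism Tmap X \<xi> Z \<gamma> h \<and>
        coalg_morphism Tmap Y \<zeta> Z \<gamma> g \<and> h x = g y)"

datatype ('v, 'm) expr = Var 'v | Nu 'v "('v, 'm) expr" | Mod 'm "('v, 'm) expr list"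

fun wf_expr :: "('m \<Rightarrow> nat) \<Rightarrow> ('v, 'm) expr \<Rightarrow> bool" where
  "wf_expr ar (Var x) = True"
| "wf_expr ar (Nu x \<phi>) = wf_expr ar \<phi>"
| "wf_expr ar (Mod L as) = (length as = ar L \<and> (\<forall>a\<in>set as. wf_expr ar a))"

fun fv :: "('v, 'm) expr \<Rightarrow> 'v set" where
  "fv (Var x) = {x}"
| "fv (Nu x \<phi>) = fv \<phi> - {x}"
| "fv (Mod L as) = (\<Union>a\<in>set as. fv a)"

definition closed :: "('v, 'm) expr \<Rightarrow> bool" where
  "closed \<phi> \<longleftrightarrow> fv \<phi> = {}"

fun ugv :: "('v, 'm) expr \<Rightarrow> 'v set" where
  "ugv (Var x) = {x}"
| "ugv (Nu x \<phi>) = ugv \<phi> - {x}"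
| "ugv (Mod L as) = {}"

fun guarded :: "('v, 'm) expr \<Rightarrow> bool" where
  "guarded (Var x) = True"
| "guarded (Nu x \<phi>) = (guarded \<phi> \<and> x \<notin> ugv \<phi>)"
| "guarded (Mod L as) = (\<forall>a\<in>set as. guarded a)"

definition E0 :: "('m \<Rightarrow> nat) \<Rightarrow> ('v, 'm) expr set" where
  "E0 ar = {\<phi>. wf_expr ar \<phi> \<and> closed \<phi> \<and> guarded \<phi>}"

text \<open>Substitution of an expression s for the free occurrences of x (capture-avoidance is
  not needed since it is only used with closed s).\<close>
fun subst :: "'v \<Rightarrow> ('v, 'm) expr \<Rightarrow> ('v, 'm) expr \<Rightarrow> ('v, 'm) expr" where
  "subst x s (Var y) = (if y = x then s else Var y)"
| "subst x s (Nu y \<phi>) = (if y = x then Nu y \<phi> else Nu y (subst x s \<phi>))"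
| "subst x s (Mod L as) = Mod L (map (subst x s) as)"

text \<open>Alpha-equivalence: equality modulo renaming of bound variables, via an
  environment of corresponding binders (innermost first).\<close>
fun var_corr :: "('v \<times> 'v) list \<Rightarrow> 'v \<Rightarrow> 'v \<Rightarrow> bool" where
  "var_corr [] x y = (x = y)"
| "var_corr ((a, b) # \<Gamma>) x y =
     (if x = a \<or> y = b then x = a \<and> y = b else var_corr \<Gamma> x y)"

inductive alpha_env :: "('v \<times> 'v) list \<Rightarrow> ('v, 'm) expr \<Rightarrow> ('v, 'm) expr \<Rightarrow> bool" where
  "var_corr \<Gamma> x y \<Longrightarrow> alpha_env \<Gamma> (Var x) (Var y)"
| "alpha_env ((x, y) # \<Gamma>) \<phi> \<psi> \<Longrightarrow> alpha_env \<Gamma> (Nu x \<phi>) (Nu y \<psi>)"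
| "list_all2 (alpha_env \<Gamma>) as bs \<Longrightarrow> alpha_env \<Gamma> (Mod L as) (Mod L bs)"

definition alpha_eq :: "('v, 'm) expr \<Rightarrow> ('v, 'm) expr \<Rightarrow> bool" where
  "alpha_eq \<phi> \<psi> \<longleftrightarrow> alpha_env [] \<phi> \<psi>"

inductive unf :: "('v, 'm) expr \<Rightarrow> ('v, 'm) expr \<Rightarrow> bool" where
  "unf (Mod L as) (Mod L as)"
| "unf (subst x (Nu x \<phi>) \<phi>) r \<Longrightarrow> unf (Nu x \<phi>) r"

definition eps ::
  "('m \<Rightarrow> nat) \<Rightarrow> ('m \<Rightarrow> ('v, 'm) expr set \<Rightarrow> ('v, 'm) expr set list \<Rightarrow> 't set)
     \<Rightarrow> ('v, 'm) expr \<Rightarrow> 't" where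
  "eps ar lift \<phi> = (THE t. \<exists>L as. unf \<phi> (Mod L as) \<and>
       t \<in> lift L (E0 ar) (map (\<lambda>\<psi>. {\<psi>}) as))"

end

theory Submission
  imports Defs
begin

text \<open>Identify closed guarded expressions up to the equivalence generated by alpha-equivalence,
  via a choice of representatives c, and equip the set Z of representatives with the structure
  T c \<circ> \<epsilon>. Alpha-equivalent expressions unfold to the same modality L with pointwise
  equivalent arguments, and \<epsilon> picks the unique element of [[L]]({\<phi>_1},...,{\<phi>_n});
  by monotonicity and naturality of [[L]], T c maps it into the singleton
  [[L]]_Z({c \<phi>_1},...,{c \<phi>_n}), which does not depend on the chosen representative.
  Hence c is a coalgebra morphism, and it identifies \<phi> with \<psi>.\<close>

lemma subst_fresh: "y \<notin> fv \<psi> \<Longrightarrow> subst y t \<psi> = \<psi>"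
  by (induction \<psi>) (auto intro: map_idI)

lemma fv_subst: "fv (subst x s \<phi>) \<subseteq> (fv \<phi> - {x}) \<union> fv s"
  by (induction \<phi>) auto

lemma ugv_subset_fv: "ugv \<phi> \<subseteq> fv \<phi>"
  by (induction \<phi>) auto

lemma ugv_subst: "ugv (subst x s \<phi>) \<subseteq> ugv \<phi> \<union> ugv s"
  by (induction \<phi>) auto

lemma guarded_subst: "guarded \<phi> \<Longrightarrow> guarded s \<Longrightarrow> closed s \<Longrightarrow> guarded (subst x s \<phi>)"
proof (induction \<phi>)
  case (Nu y \<phi>)
  then show ?case using ugv_subst[of x s \<phi>] ugv_subset_fv[of s] by (auto simp: closed_def)
qed auto

lemma wf_expr_subst: "wf_expr ar \<phi> \<Longrightarrow> wf_expr ar s \<Longrightarrow> wf_expr ar (subst x s \<phi>)"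
  by (induction \<phi>) auto

lemma closed_subst_Nu: "closed (Nu x \<phi>) \<Longrightarrow> closed (subst x (Nu x \<phi>) \<phi>)"
  using fv_subst[of x "Nu x \<phi>" \<phi>] unfolding closed_def by auto

lemma E0_subst_Nu: "Nu x \<phi> \<in> E0 ar \<Longrightarrow> subst x (Nu x \<phi>) \<phi> \<in> E0 ar"
  using closed_subst_Nu[of x \<phi>] guarded_subst[of \<phi> "Nu x \<phi>" x] wf_expr_subst[of ar \<phi> "Nu x \<phi>" x]
  by (auto simp: E0_def)

lemma Mod_E0D: "Mod L as \<in> E0 ar \<Longrightarrow> length as = ar L \<and> set as \<subseteq> E0 ar"
  unfolding E0_def closed_def by auto

fun nu_depth :: "('v, 'm) expr \<Rightarrow> nat" where
  "nu_depth (Var x) = 0"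
| "nu_depth (Nu x \<phi>) = Suc (nu_depth \<phi>)"
| "nu_depth (Mod L as) = 0"

lemma nu_depth_subst: "x \<notin> ugv \<phi> \<Longrightarrow> nu_depth (subst x s \<phi>) = nu_depth \<phi>"
  by (induction \<phi>) auto

text \<open>Unfolding terminates: by guardedness the bound variable does not occur unguarded in
  the body, so substituting into it does not create leading binders.\<close>
lemma unf_exists: "\<phi> \<in> E0 ar \<Longrightarrow> \<exists>L as. unf \<phi> (Mod L as)"
proof (induction "nu_depth \<phi>" arbitrary: \<phi> rule: less_induct)
  case less
  show ?case
  proof (cases \<phi>)
    case (Var x)
    then show ?thesis using less.prems by (auto simp: E0_def closed_def)
  next
    case (Nu x \<phi>')
    then have "x \<notin> ugv \<phi>'" using less.prems by (auto simp: E0_def)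
    then have "nu_depth (subst x (Nu x \<phi>') \<phi>') < nu_depth \<phi>" using Nu by (simp add: nu_depth_subst)
    moreover have "subst x (Nu x \<phi>') \<phi>' \<in> E0 ar" using less.prems Nu by (simp add: E0_subst_Nu)
    ultimately obtain L as where "unf (subst x (Nu x \<phi>') \<phi>') (Mod L as)"
      using less.hyps by blast
    then show ?thesis using Nu by (blast intro: unf.intros(2))
  next
    case (Mod L as)
    then show ?thesis by (blast intro: unf.intros(1))
  qed
qed

lemma unf_E0: "unf \<phi> r \<Longrightarrow> \<phi> \<in> E0 ar \<Longrightarrow> r \<in> E0 ar"
  by (induction rule: unf.induct) (simp_all add: E0_subst_Nu)

lemma unf_deterministic: "unf \<phi> r \<Longrightarrow> unf \<phi> r' \<Longrightarrow> r = r'"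
proof (induction arbitrary: r' rule: unf.induct)
  case (1 L as)
  then show ?case by (cases rule: unf.cases) simp_all
next
  case (2 x \<phi> r)
  from "2.prems" have "unf (subst x (Nu x \<phi>) \<phi>) r'" by (cases rule: unf.cases) simp_all
  then show ?case by (rule "2.IH")
qed

lemma var_corr_swap: "var_corr (map prod.swap \<Gamma>) y x = var_corr \<Gamma> x y"
  by (induction \<Gamma> x y rule: var_corr.induct) auto

lemma alpha_env_swap: "alpha_env \<Gamma> \<phi> \<psi> \<Longrightarrow> alpha_env (map prod.swap \<Gamma>) \<psi> \<phi>"
proof (induction rule: alpha_env.induct)
  case (1 \<Gamma> x y)
  then show ?case by (simp add: alpha_env.intros(1) var_corr_swap)
next
  case (2 x y \<Gamma> \<phi> \<psi>)
  then show ?case by (simp add: alpha_env.intros(2))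
next
  case (3 \<Gamma> as bs L)
  then have "list_all2 (alpha_env (map prod.swap \<Gamma>))\<inverse>\<inverse> as bs"
    by (rule list_all2_mono) simp
  then have "list_all2 (alpha_env (map prod.swap \<Gamma>)) bs as"
    by (simp only: list.rel_flip)
  then show ?case by (rule alpha_env.intros(3))
qed

lemma alpha_eq_sym: "alpha_eq \<phi> \<psi> \<Longrightarrow> alpha_eq \<psi> \<phi>"
  unfolding alpha_eq_def by (drule alpha_env_swap) simp

lemma alpha_env_fv_right: "alpha_env \<Gamma> \<phi> \<psi> \<Longrightarrow> v \<in> fv \<psi> \<Longrightarrow> \<exists>u. var_corr \<Gamma> u v"
proof (induction arbitrary: v rule: alpha_env.induct)
  case (2 x y \<Gamma> \<phi> \<psi>)
  then have "v \<in> fv \<psi>" "v \<noteq> y" by auto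
  with "2.IH" obtain u where "var_corr ((x, y) # \<Gamma>) u v" by blast
  with \<open>v \<noteq> y\<close> show ?case by (auto split: if_splits)
next
  case (3 \<Gamma> as bs L)
  then obtain i where "i < length bs" "v \<in> fv (bs ! i)" by (auto simp: in_set_conv_nth)
  with "3.IH" show ?case by (blast dest: list_all2_nthD2)
qed auto

lemma alpha_env_fv_left: "alpha_env \<Gamma> \<phi> \<psi> \<Longrightarrow> u \<in> fv \<phi> \<Longrightarrow> \<exists>v. var_corr \<Gamma> u v"
  by (drule alpha_env_swap, drule alpha_env_fv_right) (auto simp: var_corr_swap)

lemma alpha_env_change_env:
  "alpha_env \<Gamma> s t \<Longrightarrow> \<forall>u v. var_corr \<Gamma> u v \<and> u \<in> fv s \<and> v \<in> fv t \<longrightarrow> var_corr \<Gamma>' u v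
     \<Longrightarrow> alpha_env \<Gamma>' s t"
proof (induction arbitrary: \<Gamma>' rule: alpha_env.induct)
  case (1 \<Gamma> x y)
  then show ?case by (auto intro: alpha_env.intros)
next
  case (2 x y \<Gamma> \<phi> \<psi>)
  have "alpha_env ((x, y) # \<Gamma>') \<phi> \<psi>"
  proof (rule "2.IH", intro allI impI)
    fix u v assume uv: "var_corr ((x, y) # \<Gamma>) u v \<and> u \<in> fv \<phi> \<and> v \<in> fv \<psi>"
    show "var_corr ((x, y) # \<Gamma>') u v"
    proof (cases "u = x \<or> v = y")
      case True
      then show ?thesis using uv by (simp split: if_splits)
    next
      case False
      then have "var_corr \<Gamma> u v" "u \<in> fv (Nu x \<phi>)" "v \<in> fv (Nu y \<psi>)" using uv by auto
      then show ?thesis using False "2.prems" by simp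
    qed
  qed
  then show ?case by (rule alpha_env.intros)
next
  case (3 \<Gamma> as bs L)
  have "list_all2 (alpha_env \<Gamma>') as bs"
    unfolding list_all2_conv_all_nth
  proof (intro conjI allI impI)
    show "length as = length bs" using "3.IH" by (rule list_all2_lengthD)
    fix i assume i: "i < length as"
    then have ih: "\<And>\<Gamma>'. \<forall>u v. var_corr \<Gamma> u v \<and> u \<in> fv (as ! i) \<and> v \<in> fv (bs ! i)
        \<longrightarrow> var_corr \<Gamma>' u v \<Longrightarrow> alpha_env \<Gamma>' (as ! i) (bs ! i)"
      using "3.IH" by (simp add: list_all2_conv_all_nth)
    have "i < length bs" using i "3.IH" by (simp add: list_all2_lengthD)
    with i have "fv (as ! i) \<subseteq> fv (Mod L as)" "fv (bs ! i) \<subseteq> fv (Mod L bs)"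
      by (auto dest: nth_mem)
    with "3.prems" show "alpha_env \<Gamma>' (as ! i) (bs ! i)" by (intro ih) blast
  qed
  then show ?case by (rule alpha_env.intros)
qed

lemma alpha_env_closed: "alpha_env \<Gamma> s t \<Longrightarrow> closed s \<Longrightarrow> alpha_env \<Delta> s t"
  by (erule alpha_env_change_env) (simp add: closed_def)

text \<open>Relatedness of s and t in every environment (as for closed alpha-equivalent expressions,
  by alpha_env_closed) is what survives passing under binders.\<close>
lemma alpha_env_subst:
  "alpha_env \<Gamma> \<phi> \<psi> \<Longrightarrow> \<forall>u v. var_corr \<Gamma> u v \<longrightarrow> (u = x0 \<longleftrightarrow> v = y0) \<Longrightarrow>
   \<forall>\<Delta>. alpha_env \<Delta> s t \<Longrightarrow> alpha_env \<Gamma> (subst x0 s \<phi>) (subst y0 t \<psi>)"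
proof (induction rule: alpha_env.induct)
  case (1 \<Gamma> x y)
  then show ?case by (auto intro: alpha_env.intros)
next
  case (2 x y \<Gamma> \<phi> \<psi>)
  consider "x = x0" "y = y0" | "x \<noteq> x0" "y \<noteq> y0" | "x = x0" "y \<noteq> y0" | "x \<noteq> x0" "y = y0"
    by blast
  then show ?case
  proof cases
    case 1
    then show ?thesis using "2.hyps" by (simp add: alpha_env.intros(2))
  next
    case 2
    have "\<forall>u v. var_corr ((x, y) # \<Gamma>) u v \<longrightarrow> (u = x0 \<longleftrightarrow> v = y0)"
    proof (intro allI impI)
      fix u v assume uv: "var_corr ((x, y) # \<Gamma>) u v"
      show "u = x0 \<longleftrightarrow> v = y0"
      proof (cases "u = x \<or> v = y")
        case True
        then show ?thesis using uv 2 by (simp split: if_splits)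
      next
        case False
        then show ?thesis using uv "2.prems"(1) by simp
      qed
    qed
    then have "alpha_env ((x, y) # \<Gamma>) (subst x0 s \<phi>) (subst y0 t \<psi>)"
      using "2.prems"(2) by (rule "2.IH")
    then show ?thesis using 2 by (simp add: alpha_env.intros(2))
  next
    case 3
    have "y0 \<notin> fv \<psi>"
    proof
      assume "y0 \<in> fv \<psi>"
      then obtain u where "var_corr ((x, y) # \<Gamma>) u y0" using alpha_env_fv_right[OF "2.hyps"] by blast
      with 3 have "var_corr \<Gamma> u y0" "u \<noteq> x0" by (simp_all split: if_splits)
      then show False using "2.prems"(1) by blast
    qed
    then show ?thesis using 3 "2.hyps" by (simp add: subst_fresh alpha_env.intros(2))
  next
    case 4
    have "x0 \<notin> fv \<phi>"
    proof
      assume "x0 \<in> fv \<phi>"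
      then obtain v where "var_corr ((x, y) # \<Gamma>) x0 v" using alpha_env_fv_left[OF "2.hyps"] by blast
      with 4 have "var_corr \<Gamma> x0 v" "v \<noteq> y0" by (simp_all split: if_splits)
      then show False using "2.prems"(1) by blast
    qed
    then show ?thesis using 4 "2.hyps" by (simp add: subst_fresh alpha_env.intros(2))
  qed
next
  case (3 \<Gamma> as bs L)
  then have "list_all2 (alpha_env \<Gamma>) (map (subst x0 s) as) (map (subst y0 t) bs)"
    using "3.IH" "3.prems" by (simp add: list_all2_conv_all_nth)
  then show ?case by (simp add: alpha_env.intros(3))
qed

inductive_cases alpha_env_NuE: "alpha_env \<Gamma> (Nu x \<phi>) b"
inductive_cases alpha_env_ModE: "alpha_env \<Gamma> (Mod L as) b"

lemma alpha_eq_subst_Nu: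
  assumes "alpha_eq (Nu x \<phi>) (Nu y \<psi>)" and "closed (Nu x \<phi>)"
  shows "alpha_eq (subst x (Nu x \<phi>) \<phi>) (subst y (Nu y \<psi>) \<psi>)"
proof -
  from assms(1) have body: "alpha_env [(x, y)] \<phi> \<psi>"
    unfolding alpha_eq_def by (rule alpha_env_NuE) simp
  have "\<forall>u v. var_corr [(x, y)] u v \<longrightarrow> (u = x \<longleftrightarrow> v = y)"
    by (simp only: var_corr.simps) fastforce
  moreover have "\<forall>\<Delta>. alpha_env \<Delta> (Nu x \<phi>) (Nu y \<psi>)"
    using assms unfolding alpha_eq_def by (blast intro: alpha_env_closed)
  ultimately have "alpha_env [(x, y)] (subst x (Nu x \<phi>) \<phi>) (subst y (Nu y \<psi>) \<psi>)"
    by (rule alpha_env_subst[OF body])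
  then show ?thesis
    unfolding alpha_eq_def using closed_subst_Nu[OF assms(2)] by (rule alpha_env_closed)
qed

lemma alpha_eq_unf:
  "unf a r \<Longrightarrow> alpha_eq a b \<Longrightarrow> closed a \<Longrightarrow> \<exists>r'. unf b r' \<and> alpha_eq r r'"
proof (induction arbitrary: b rule: unf.induct)
  case (1 L as)
  from "1.prems"(1) obtain bs where "b = Mod L bs"
    unfolding alpha_eq_def by (rule alpha_env_ModE) simp
  then show ?case using "1.prems"(1) by (blast intro: unf.intros(1))
next
  case (2 x \<phi> r)
  from "2.prems"(1) obtain y \<psi> where b: "b = Nu y \<psi>"
    unfolding alpha_eq_def by (rule alpha_env_NuE) simp
  have "alpha_eq (subst x (Nu x \<phi>) \<phi>) (subst y (Nu y \<psi>) \<psi>)"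
    using "2.prems" unfolding b by (rule alpha_eq_subst_Nu)
  then obtain r' where "unf (subst y (Nu y \<psi>) \<psi>) r'" "alpha_eq r r'"
    using "2.IH" closed_subst_Nu[OF "2.prems"(2)] by blast
  then show ?case unfolding b by (blast intro: unf.intros(2))
qed

lemma alpha_eq_unf_Mod:
  assumes "alpha_eq a b" "closed a" "unf a (Mod L as)"
  shows "\<exists>bs. unf b (Mod L bs) \<and> list_all2 alpha_eq as bs"
proof -
  obtain r' where r': "unf b r'" "alpha_eq (Mod L as) r'"
    using alpha_eq_unf[OF assms(3,1,2)] by blast
  from r'(2) obtain bs where "r' = Mod L bs" "list_all2 (alpha_env []) as bs"
    unfolding alpha_eq_def by (rule alpha_env_ModE) simp
  moreover have "alpha_env [] = alpha_eq" by (simp add: alpha_eq_def fun_eq_iff)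
  ultimately show ?thesis using r'(1) by metis
qed

definition alpha_E0 :: "('m \<Rightarrow> nat) \<Rightarrow> ('v, 'm) expr \<Rightarrow> ('v, 'm) expr \<Rightarrow> bool" where
  "alpha_E0 ar a b \<longleftrightarrow> a \<in> E0 ar \<and> b \<in> E0 ar \<and> alpha_eq a b"

lemma equivp_alpha_E0: "equivp (alpha_E0 ar)\<^sup>*\<^sup>*"
  by (rule equivp_rtranclp) (auto simp: alpha_E0_def alpha_eq_sym intro: sympI)

lemma alpha_E0_rtranclp_E0: "(alpha_E0 ar)\<^sup>*\<^sup>* a b \<Longrightarrow> a \<in> E0 ar \<Longrightarrow> b \<in> E0 ar"
  by (induction rule: rtranclp_induct) (auto simp: alpha_E0_def)

lemma alpha_E0_unf_Mod:
  assumes "alpha_E0 ar a b" "unf a (Mod L as)"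
  shows "\<exists>bs. unf b (Mod L bs) \<and> list_all2 (alpha_E0 ar) as bs"
proof -
  have a: "a \<in> E0 ar" and b: "b \<in> E0 ar" and ab: "alpha_eq a b"
    using assms(1) by (simp_all add: alpha_E0_def)
  then obtain bs where bs: "unf b (Mod L bs)" "list_all2 alpha_eq as bs"
    using alpha_eq_unf_Mod[OF ab _ assms(2)] a by (auto simp: E0_def)
  have "set as \<subseteq> E0 ar" "set bs \<subseteq> E0 ar"
    using Mod_E0D[OF unf_E0[OF assms(2) a]] Mod_E0D[OF unf_E0[OF bs(1) b]] by simp_all
  with bs(2) have "list_all2 (alpha_E0 ar) as bs"
    by (elim list.rel_mono_strong) (auto simp: alpha_E0_def)
  with bs(1) show ?thesis by blast
qed

lemma alpha_E0_rtranclp_unf_Mod: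
  assumes "(alpha_E0 ar)\<^sup>*\<^sup>* a b" "unf a (Mod L as)"
  shows "\<exists>bs. unf b (Mod L bs) \<and> list_all2 (alpha_E0 ar)\<^sup>*\<^sup>* as bs"
  using assms(1)
proof (induction rule: rtranclp_induct)
  case base
  then show ?case using assms(2) by (auto intro: list_all2_refl)
next
  case (step b c)
  then obtain bs where bs: "unf b (Mod L bs)" "list_all2 (alpha_E0 ar)\<^sup>*\<^sup>* as bs" by blast
  obtain cs where cs: "unf c (Mod L cs)" "list_all2 (alpha_E0 ar) bs cs"
    using alpha_E0_unf_Mod[OF step.hyps(2) bs(1)] by blast
  have "list_all2 (alpha_E0 ar)\<^sup>*\<^sup>* as cs"
    using rtranclp.rtrancl_into_rtrancl bs(2) cs(2) by (rule list_all2_trans)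
  with cs(1) show ?case by blast
qed

text \<open>The common coalgebra must live on expressions again, so equivalence classes are
  represented by chosen members.\<close>
definition alpha_canon :: "('m \<Rightarrow> nat) \<Rightarrow> ('v, 'm) expr \<Rightarrow> ('v, 'm) expr" where
  "alpha_canon ar a = (SOME b. (alpha_E0 ar)\<^sup>*\<^sup>* a b)"

lemma alpha_canon_rel: "(alpha_E0 ar)\<^sup>*\<^sup>* a (alpha_canon ar a)"
  unfolding alpha_canon_def by (rule someI[of _ a]) simp

lemma alpha_canon_eq: "(alpha_E0 ar)\<^sup>*\<^sup>* a b \<Longrightarrow> alpha_canon ar a = alpha_canon ar b"
  using equivp_alpha_E0[of ar] unfolding alpha_canon_def equivp_def by metis

lemma set_functor_funcset:
  assumes "set_functor Tob Tmap" "f \<in> X \<rightarrow> Y"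
  shows "Tmap X Y f \<in> Tob X \<rightarrow> Tob Y"
  using conjunct1[OF assms(1)[unfolded set_functor_def]] assms(2) by blast

lemma pred_lifting_subset_Tob:
  "pred_lifting Tob Tmap n lift \<Longrightarrow> length As = n \<Longrightarrow> \<forall>A\<in>set As. A \<subseteq> X \<Longrightarrow> lift X As \<subseteq> Tob X"
  unfolding pred_lifting_def by simp

lemma pred_lifting_natural:
  "pred_lifting Tob Tmap n lift \<Longrightarrow> f \<in> X \<rightarrow> Y \<Longrightarrow> length As = n \<Longrightarrow> \<forall>A\<in>set As. A \<subseteq> Y \<Longrightarrow>
     lift X (map (\<lambda>A. X \<inter> f -` A) As) = {t \<in> Tob X. Tmap X Y f t \<in> lift Y As}"
  unfolding pred_lifting_def by simp

lemma pred_lifting_mono: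
  "pred_lifting Tob Tmap n lift \<Longrightarrow> length As = n \<Longrightarrow> length Bs = n \<Longrightarrow> \<forall>B\<in>set Bs. B \<subseteq> X \<Longrightarrow>
     \<forall>i<n. As ! i \<subseteq> Bs ! i \<Longrightarrow> lift X As \<subseteq> lift X Bs"
  unfolding pred_lifting_def by simp

lemma pred_lifting_singletons:
  assumes "pred_lifting Tob Tmap n lift" "length xs = n" "set xs \<subseteq> X"
  obtains t where "lift X (map (\<lambda>x. {x}) xs) = {t}"
proof -
  have "card (lift X (map (\<lambda>x. {x}) xs)) = 1"
    using assms unfolding pred_lifting_def by blast
  then show thesis using that by (rule card_1_singletonE)
qed

text \<open>Naturality applied to the preimages of the singletons of the image, which contain the
  original singletons.\<close>
lemma pred_lifting_Tmap_singletons: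
  assumes pl: "pred_lifting Tob Tmap n lift" and f: "f \<in> X \<rightarrow> Y"
    and xs: "length xs = n" "set xs \<subseteq> X" and t: "t \<in> lift X (map (\<lambda>x. {x}) xs)"
  shows "Tmap X Y f t \<in> lift Y (map (\<lambda>y. {y}) (map f xs))"
proof -
  let ?Bs = "map (\<lambda>y. {y}) (map f xs)"
  have "lift X (map (\<lambda>x. {x}) xs) \<subseteq> lift X (map (\<lambda>B. X \<inter> f -` B) ?Bs)"
  proof (rule pred_lifting_mono[OF pl])
    show "\<forall>i<n. map (\<lambda>x. {x}) xs ! i \<subseteq> map (\<lambda>B. X \<inter> f -` B) ?Bs ! i"
      using xs f by (auto dest: nth_mem)
  qed (use xs in auto)
  also have "\<dots> = {t \<in> Tob X. Tmap X Y f t \<in> lift Y ?Bs}"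
    using xs f by (intro pred_lifting_natural[OF pl f]) auto
  finally show ?thesis using t by blast
qed

lemma eps_unf:
  assumes pl: "\<forall>L. pred_lifting Tob Tmap (ar L) (lift L)"
    and \<phi>: "\<phi> \<in> E0 ar" and u: "unf \<phi> (Mod L as)"
  shows "lift L (E0 ar) (map (\<lambda>\<psi>. {\<psi>}) as) = {eps ar lift \<phi>}"
proof -
  have "length as = ar L" "set as \<subseteq> E0 ar" using Mod_E0D[OF unf_E0[OF u \<phi>]] by simp_all
  then obtain t where t: "lift L (E0 ar) (map (\<lambda>\<psi>. {\<psi>}) as) = {t}"
    by (rule pred_lifting_singletons[OF pl[rule_format]])
  have "eps ar lift \<phi> = t"
    unfolding eps_def
  proof (rule the_equality)
    show "\<exists>L' as'. unf \<phi> (Mod L' as') \<and> t \<in> lift L' (E0 ar) (map (\<lambda>\<psi>. {\<psi>}) as')"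
      using u t by blast
  next
    fix t' assume "\<exists>L' as'. unf \<phi> (Mod L' as') \<and> t' \<in> lift L' (E0 ar) (map (\<lambda>\<psi>. {\<psi>}) as')"
    then obtain L' as' where "unf \<phi> (Mod L' as')" "t' \<in> lift L' (E0 ar) (map (\<lambda>\<psi>. {\<psi>}) as')"
      by blast
    with unf_deterministic[OF _ u] t show "t' = t" by auto
  qed
  with t show ?thesis by simp
qed

lemma eps_in_Tob:
  assumes pl: "\<forall>L. pred_lifting Tob Tmap (ar L) (lift L)" and \<phi>: "\<phi> \<in> E0 ar"
  shows "eps ar lift \<phi> \<in> Tob (E0 ar)"
proof -
  obtain L as where u: "unf \<phi> (Mod L as)" using unf_exists[OF \<phi>] by blast
  have "length as = ar L" "set as \<subseteq> E0 ar" using Mod_E0D[OF unf_E0[OF u \<phi>]] by simp_all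
  then have "lift L (E0 ar) (map (\<lambda>\<psi>. {\<psi>}) as) \<subseteq> Tob (E0 ar)"
    by (intro pred_lifting_subset_Tob[OF pl[rule_format]]) auto
  with eps_unf[OF pl \<phi> u] show ?thesis by simp
qed

text \<open>Both sides are the unique element of [[L]]_Z({c a_1},...,{c a_n}), where
  L(a_1,...,a_n) is the unfolding of \<phi>.\<close>
lemma Tmap_eps_alpha_invariant:
  assumes pl: "\<forall>L. pred_lifting Tob Tmap (ar L) (lift L)"
    and c: "c \<in> E0 ar \<rightarrow> Z" "\<And>a b. (alpha_E0 ar)\<^sup>*\<^sup>* a b \<Longrightarrow> c a = c b"
    and \<phi>: "\<phi> \<in> E0 ar" and \<phi>\<psi>: "(alpha_E0 ar)\<^sup>*\<^sup>* \<phi> \<psi>"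
  shows "Tmap (E0 ar) Z c (eps ar lift \<phi>) = Tmap (E0 ar) Z c (eps ar lift \<psi>)"
proof -
  have \<psi>: "\<psi> \<in> E0 ar" using alpha_E0_rtranclp_E0[OF \<phi>\<psi> \<phi>] .
  obtain L as where as: "unf \<phi> (Mod L as)" using unf_exists[OF \<phi>] by blast
  then obtain bs where bs: "unf \<psi> (Mod L bs)" "list_all2 (alpha_E0 ar)\<^sup>*\<^sup>* as bs"
    using alpha_E0_rtranclp_unf_Mod[OF \<phi>\<psi>] by blast
  from bs(2) have map_eq: "map c bs = map c as"
    by (induction rule: list_all2_induct) (simp_all add: c(2))
  have plL: "pred_lifting Tob Tmap (ar L) (lift L)" using pl by blast
  have "Tmap (E0 ar) Z c (eps ar lift \<phi>) \<in> lift L Z (map (\<lambda>y. {y}) (map c as))"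
    using Mod_E0D[OF unf_E0[OF as \<phi>]] eps_unf[OF pl \<phi> as]
    by (intro pred_lifting_Tmap_singletons[OF plL c(1)]) auto
  moreover have "Tmap (E0 ar) Z c (eps ar lift \<psi>) \<in> lift L Z (map (\<lambda>y. {y}) (map c as))"
    using Mod_E0D[OF unf_E0[OF bs(1) \<psi>]] eps_unf[OF pl \<psi> bs(1)] map_eq
    by (metis insertI1 pred_lifting_Tmap_singletons[OF plL c(1)])
  moreover have "length (map c as) = ar L" "set (map c as) \<subseteq> Z"
    using Mod_E0D[OF unf_E0[OF as \<phi>]] c(1) by auto
  then obtain t where "lift L Z (map (\<lambda>y. {y}) (map c as)) = {t}"
    by (rule pred_lifting_singletons[OF plL])
  ultimately show ?thesis by simp
qed

theorem mainTheorem15: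
  fixes Tob :: "('v, 'm) expr set \<Rightarrow> 't set"
    and Tmap :: "('v, 'm) expr set \<Rightarrow> ('v, 'm) expr set \<Rightarrow> (('v, 'm) expr \<Rightarrow> ('v, 'm) expr) \<Rightarrow> 't \<Rightarrow> 't"
    and ar :: "'m \<Rightarrow> nat"
    and lift :: "'m \<Rightarrow> ('v, 'm) expr set \<Rightarrow> ('v, 'm) expr set list \<Rightarrow> 't set"
    and \<phi> \<psi> :: "('v, 'm) expr"
  assumes "set_functor Tob Tmap"
    and "\<forall>L. pred_lifting Tob Tmap (ar L) (lift L)"
    and "\<phi> \<in> E0 ar" and "\<psi> \<in> E0 ar"
    and "alpha_eq \<phi> \<psi>"
  shows "beh_equiv Tob Tmap (E0 ar) (eps ar lift) \<phi> (E0 ar) (eps ar lift) \<psi>"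
proof -
  define c :: "('v, 'm) expr \<Rightarrow> ('v, 'm) expr" where "c = alpha_canon ar"
  define Z where "Z = c ` E0 ar"
  define \<gamma> where "\<gamma> z = Tmap (E0 ar) Z c (eps ar lift z)" for z
  have c_Z: "c \<in> E0 ar \<rightarrow> Z" unfolding Z_def by blast
  have c_rel: "(alpha_E0 ar)\<^sup>*\<^sup>* x (c x)" for x unfolding c_def by (rule alpha_canon_rel)
  have c_eq: "c a = c b" if "(alpha_E0 ar)\<^sup>*\<^sup>* a b" for a b
    unfolding c_def using that by (rule alpha_canon_eq)
  have "Z \<subseteq> E0 ar" unfolding Z_def using alpha_E0_rtranclp_E0[OF c_rel] by blast
  then have "coalgebra Tob Z \<gamma>"
    unfolding coalgebra_def \<gamma>_def
    using eps_in_Tob[OF assms(2)] set_functor_funcset[OF assms(1) c_Z] by auto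
  moreover have "coalg_morphism Tmap (E0 ar) (eps ar lift) Z \<gamma> c"
    unfolding coalg_morphism_def \<gamma>_def
    using c_Z Tmap_eps_alpha_invariant[OF assms(2) c_Z c_eq _ c_rel] by blast
  moreover have "c \<phi> = c \<psi>"
    using assms(3-5) by (intro c_eq r_into_rtranclp) (simp add: alpha_E0_def)
  ultimately show ?thesis unfolding beh_equiv_def by blast
qed

end
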